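(* Let $A$ be a $2r\times2r$ integer matrix. Then $A$ is (integrally) null-cobordant if and only if it is rationally null-cobordant.
   Context: $'$ denotes transpose. A $2r\times 2r$ integer matrix $A$ is null-cobordant if there is $P\in GL_{2r}(\mathbb Z)$ with $P'AP=\begin{pmatrix}0&N_1\\N_2&N_3\end{pmatrix}$, each $N_i$ an $r\times r$ block; a $2r\times2r$ rational matrix $A$ is rationally null-cobordant if such a $P$ exists in $GL_{2r}(\mathbb Q)$ (equivalently, the bilinear form $(x,y)\mapsto x'Ay$ on $\mathbb Q^{2r}$ vanishes on some $r$-dimensional subspace). *)

theory Defs
  imports "Jordan_Normal_Form.Matrix"
begin

definition null_cobordant_over :: "nat \<Rightarrow> 'a::comm_ring_1 mat \<Rightarrow> bool" where
  "null_cobordant_over r A \<longleftrightarrow>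
     A \<in> carrier_mat (2*r) (2*r) \<and>
     (\<exists>P \<in> carrier_mat (2*r) (2*r). invertible_mat P \<and>
        (\<forall>i<r. \<forall>j<r. (transpose_mat P * A * P) $$ (i, j) = 0))"

abbreviation null_cobordant :: "nat \<Rightarrow> int mat \<Rightarrow> bool" where
  "null_cobordant r A \<equiv> null_cobordant_over r A"

abbreviation rationally_null_cobordant :: "nat \<Rightarrow> rat mat \<Rightarrow> bool" where
  "rationally_null_cobordant r A \<equiv> null_cobordant_over r A"

end

theory Submission
  imports Defs "Jordan_Normal_Form.Determinant"
begin

text \<open>Integral null-cobordance gives rational null-cobordance by mapping the witness along
  \<open>\<int> \<rightarrow> \<rat>\<close>. Conversely, clearing denominators in a rational witness gives an integer
  matrix \<open>M\<close> with \<open>det M \<noteq> 0\<close> for which \<open>M' A M\<close> has vanishing upper-left block. Row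
  reduction over \<open>\<int>\<close> (which only needs Bezout identities) factors \<open>M = V T\<close> with \<open>V\<close>
  unimodular and \<open>T\<close> upper triangular with nonzero diagonal. Since \<open>T\<close> is triangular, the
  upper-left block of \<open>M' A M = T' (V' A V) T\<close> is \<open>T\<^sub>1\<^sub>1' C\<^sub>1\<^sub>1 T\<^sub>1\<^sub>1\<close>, where \<open>C = V' A V\<close>;
  hence \<open>C\<^sub>1\<^sub>1 = 0\<close> and \<open>V\<close> is an integral witness.\<close>

lemma invertible_mat_iff_inverse:
  fixes P :: "'a :: semiring_1 mat"
  assumes P: "P \<in> carrier_mat n n"
  shows "invertible_mat P \<longleftrightarrow> (\<exists>Q \<in> carrier_mat n n. P * Q = 1\<^sub>m n \<and> Q * P = 1\<^sub>m n)"
proof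
  assume "invertible_mat P"
  then obtain Q where PQ: "P * Q = 1\<^sub>m n" and QP: "Q * P = 1\<^sub>m (dim_row Q)"
    using P unfolding invertible_mat_def inverts_mat_def by auto
  have "dim_col Q = n" using arg_cong[OF PQ, of dim_col] by simp
  moreover have "dim_row Q = n" using arg_cong[OF QP, of dim_col] P by simp
  ultimately show "\<exists>Q \<in> carrier_mat n n. P * Q = 1\<^sub>m n \<and> Q * P = 1\<^sub>m n"
    using PQ QP by auto
next
  assume "\<exists>Q \<in> carrier_mat n n. P * Q = 1\<^sub>m n \<and> Q * P = 1\<^sub>m n"
  then show "invertible_mat P"
    using P unfolding invertible_mat_def inverts_mat_def by auto
qed

lemma invertible_mat_mult:
  fixes P Q :: "'a :: semiring_1 mat"
  assumes P: "P \<in> carrier_mat n n" and Q: "Q \<in> carrier_mat n n"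
    and "invertible_mat P" "invertible_mat Q"
  shows "invertible_mat (P * Q)"
proof -
  obtain P' Q' where P': "P' \<in> carrier_mat n n" "P * P' = 1\<^sub>m n" "P' * P = 1\<^sub>m n"
    and Q': "Q' \<in> carrier_mat n n" "Q * Q' = 1\<^sub>m n" "Q' * Q = 1\<^sub>m n"
    using assms invertible_mat_iff_inverse by metis
  have "P * Q * (Q' * P') = P * ((Q * Q') * P')"
    using P Q P'(1) Q'(1) by (simp add: assoc_mult_mat[of _ n n _ n _ n])
  also have "\<dots> = 1\<^sub>m n" using P' Q' by simp
  finally have "P * Q * (Q' * P') = 1\<^sub>m n" .
  moreover have "Q' * P' * (P * Q) = Q' * ((P' * P) * Q)"
    using P Q P'(1) Q'(1) by (simp add: assoc_mult_mat[of _ n n _ n _ n])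
  then have "Q' * P' * (P * Q) = 1\<^sub>m n" using P' Q' Q by simp
  ultimately show ?thesis
    unfolding invertible_mat_iff_inverse[OF mult_carrier_mat[OF P Q]]
    using mult_carrier_mat[OF Q'(1) P'(1)] by blast
qed

lemma det_nonzero_if_invertible_mat:
  fixes P :: "'a :: comm_ring_1 mat"
  assumes P: "P \<in> carrier_mat n n" and "invertible_mat P"
  shows "det P \<noteq> 0"
proof -
  obtain Q where Q: "Q \<in> carrier_mat n n" "P * Q = 1\<^sub>m n"
    using assms invertible_mat_iff_inverse by metis
  then have "det P * det Q = 1" using det_mult[OF P Q(1)] by simp
  then show ?thesis by auto
qed

lemma (in semiring_hom) invertible_mat_hom:
  assumes P: "P \<in> carrier_mat n n" and "invertible_mat P"
  shows "invertible_mat (mat\<^sub>h P)"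
proof -
  obtain Q where Q: "Q \<in> carrier_mat n n" "P * Q = 1\<^sub>m n" "Q * P = 1\<^sub>m n"
    using assms invertible_mat_iff_inverse by metis
  then show ?thesis
    using P by (subst invertible_mat_iff_inverse[of _ n])
      (auto intro!: bexI[of _ "mat\<^sub>h Q"] simp: mat_hom_mult[symmetric] mat_hom_one)
qed

lemma (in semiring_hom) mat_hom_congruence:
  assumes "A \<in> carrier_mat n n" "P \<in> carrier_mat n n"
  shows "mat\<^sub>h (transpose_mat P * A * P) = transpose_mat (mat\<^sub>h P) * mat\<^sub>h A * mat\<^sub>h P"
  using assms
  by (simp add: mat_hom_mult[of "transpose_mat P * A" n n] mat_hom_mult[of "transpose_mat P" n n]
      map_mat_transpose del: assoc_mult_mat)

lemma (in comm_ring_hom) null_cobordant_over_hom: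
  assumes "null_cobordant_over r A"
  shows "null_cobordant_over r (mat\<^sub>h A)"
proof -
  obtain P where A: "A \<in> carrier_mat (2*r) (2*r)" and P: "P \<in> carrier_mat (2*r) (2*r)"
    and "invertible_mat P" and block: "\<forall>i<r. \<forall>j<r. (transpose_mat P * A * P) $$ (i,j) = 0"
    using assms unfolding null_cobordant_over_def by blast
  have "\<forall>i<r. \<forall>j<r. (transpose_mat (mat\<^sub>h P) * mat\<^sub>h A * mat\<^sub>h P) $$ (i,j) = 0"
    unfolding mat_hom_congruence[OF A P, symmetric] using A P block by simp
  then show ?thesis
    unfolding null_cobordant_over_def using A P invertible_mat_hom[OF P \<open>invertible_mat P\<close>]
    by (auto intro!: bexI[of _ "mat\<^sub>h P"])
qed

definition row_pair_mat :: "nat \<Rightarrow> nat \<Rightarrow> nat \<Rightarrow> 'a \<Rightarrow> 'a \<Rightarrow> 'a \<Rightarrow> 'a \<Rightarrow> 'a :: comm_ring_1 mat" where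
  "row_pair_mat n k l p q s t = mat n n (\<lambda>(i,j).
     if i = k then (if j = k then p else if j = l then q else 0)
     else if i = l then (if j = k then s else if j = l then t else 0)
     else if i = j then 1 else 0)"

lemma row_pair_mat_carrier [simp]: "row_pair_mat n k l p q s t \<in> carrier_mat n n"
  by (simp add: row_pair_mat_def)

lemma row_pair_mat_mult_index:
  assumes kl: "k < n" "l < n" "k \<noteq> l" and M: "M \<in> carrier_mat n m" and ij: "i < n" "j < m"
  shows "(row_pair_mat n k l p q s t * M) $$ (i,j) =
    (if i = k then p * M $$ (k,j) + q * M $$ (l,j)
     else if i = l then s * M $$ (k,j) + t * M $$ (l,j) else M $$ (i,j))"
proof -
  have "(row_pair_mat n k l p q s t * M) $$ (i,j) =
      (\<Sum>x<n. (if x = k then (if i = k then p else if i = l then s else 0) * M $$ (k,j) else 0)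
             + (if x = l then (if i = k then q else if i = l then t else 0) * M $$ (l,j) else 0)
             + (if x = i \<and> i \<noteq> k \<and> i \<noteq> l then M $$ (i,j) else 0))"
    using M ij kl by (auto simp: scalar_prod_def row_pair_mat_def lessThan_atLeast0 intro!: sum.cong)
  then show ?thesis
    using kl ij by (simp add: sum.distrib)
qed

lemma invertible_row_pair_mat:
  fixes p q s t :: "'a :: comm_ring_1"
  assumes kl: "k < n" "l < n" "k \<noteq> l" and det: "p * t - q * s = 1"
  shows "invertible_mat (row_pair_mat n k l p q s t)"
proof -
  have inverse: "row_pair_mat n k l a b c d * row_pair_mat n k l d (-b) (-c) a = 1\<^sub>m n"
    if "a * d - b * c = 1" for a b c d :: 'a
  proof (rule eq_matI)
    fix i j assume "i < dim_row (1\<^sub>m n :: 'a mat)" "j < dim_col (1\<^sub>m n :: 'a mat)"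
    then show "(row_pair_mat n k l a b c d * row_pair_mat n k l d (-b) (-c) a) $$ (i,j) = 1\<^sub>m n $$ (i,j)"
      using kl that
      by (subst row_pair_mat_mult_index[OF kl row_pair_mat_carrier]) (auto simp: row_pair_mat_def algebra_simps)
  qed (simp_all add: row_pair_mat_def)
  have "t * p - (-q) * (-s) = 1" using det by (simp add: algebra_simps)
  then show ?thesis
    using inverse[OF det] inverse[where a = t and b = "-q" and c = "-s" and d = p]
    by (subst invertible_mat_iff_inverse[of _ n]) (auto intro!: bexI[of _ "row_pair_mat n k l t (-q) (-s) p"])
qed

lemma bezout_det_one_clearing:
  fixes a b :: "'a :: euclidean_ring_gcd"
  assumes "b \<noteq> 0"
  obtains p q s t where "p * t - q * s = 1" "s * a + t * b = 0"
proof -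
  define g where "g = gcd a b"
  define a' b' where "a' = a div g" and "b' = b div g"
  have "g \<noteq> 0" using assms by (simp add: g_def)
  have a: "a = g * a'" and b: "b = g * b'" by (simp_all add: a'_def b'_def g_def)
  have "fst (bezout_coefficients a b) * a + snd (bezout_coefficients a b) * b = g"
    unfolding g_def by (rule bezout_coefficients_fst_snd)
  then have "g * (fst (bezout_coefficients a b) * a' + snd (bezout_coefficients a b) * b') = g * 1"
    unfolding a b by (simp add: algebra_simps)
  then have "fst (bezout_coefficients a b) * a' - snd (bezout_coefficients a b) * (- b') = 1"
    using \<open>g \<noteq> 0\<close> by simp
  moreover have "- b' * a + a' * b = 0" unfolding a b by (simp add: algebra_simps)
  ultimately show ?thesis by (rule that)
qed

definition zero_below_diagonal :: "nat \<Rightarrow> 'a :: zero mat \<Rightarrow> bool" where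
  "zero_below_diagonal c M \<longleftrightarrow> (\<forall>j<c. \<forall>i<dim_row M. j < i \<longrightarrow> M $$ (i,j) = 0)"

lemma eliminate_below_diagonal_entry:
  fixes M :: "'a :: euclidean_ring_gcd mat"
  assumes M: "M \<in> carrier_mat n n" and ck: "c < k" "k < n" and zero: "zero_below_diagonal c M"
  obtains G where "G \<in> carrier_mat n n" "invertible_mat G" "zero_below_diagonal c (G * M)"
    "(G * M) $$ (k,c) = 0" "\<And>i. i < n \<Longrightarrow> i \<noteq> c \<Longrightarrow> i \<noteq> k \<Longrightarrow> (G * M) $$ (i,c) = M $$ (i,c)"
proof (cases "M $$ (k,c) = 0")
  case True
  then show ?thesis
    using that[of "1\<^sub>m n"] M zero by (auto simp: invertible_mat_iff_inverse[of _ n])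
next
  case False
  obtain p q s t where det: "p * t - q * s = 1" and clear: "s * M $$ (c,c) + t * M $$ (k,c) = 0"
    by (rule bezout_det_one_clearing[OF False])
  have kc: "c < n" "k < n" "c \<noteq> k" using ck by auto
  define G where "G = row_pair_mat n c k p q s t"
  have GM: "(G * M) $$ (i,j) = (if i = c then p * M $$ (c,j) + q * M $$ (k,j)
      else if i = k then s * M $$ (c,j) + t * M $$ (k,j) else M $$ (i,j))"
    if "i < n" "j < n" for i j
    unfolding G_def by (rule row_pair_mat_mult_index[OF kc M that])
  show ?thesis
  proof (rule that)
    show "G \<in> carrier_mat n n" "invertible_mat G"
      unfolding G_def using invertible_row_pair_mat[OF kc det] by simp_all
    show "zero_below_diagonal c (G * M)"
      unfolding zero_below_diagonal_def
    proof (intro allI impI)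
      fix j i assume "j < c" "i < dim_row (G * M)" "j < i"
      moreover from this have "i < n" by (simp add: G_def row_pair_mat_def)
      moreover have "M $$ (c,j) = 0" "M $$ (k,j) = 0" "M $$ (i,j) = 0"
        using zero M ck calculation by (auto simp: zero_below_diagonal_def)
      ultimately show "(G * M) $$ (i,j) = 0"
        using GM ck by simp
    qed
    show "(G * M) $$ (k,c) = 0" using GM kc clear by simp
    show "(G * M) $$ (i,c) = M $$ (i,c)" if "i < n" "i \<noteq> c" "i \<noteq> k" for i
      using GM that kc by simp
  qed
qed

lemma clear_column_below_diagonal:
  fixes M :: "'a :: euclidean_ring_gcd mat"
  assumes M: "M \<in> carrier_mat n n" and zero: "zero_below_diagonal c M"
  obtains U where "U \<in> carrier_mat n n" "invertible_mat U" "zero_below_diagonal (Suc c) (U * M)"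
proof -
  have "\<exists>U \<in> carrier_mat n n. invertible_mat U \<and> zero_below_diagonal c (U * M) \<and>
          (\<forall>i. c < i \<and> i < m \<and> i < n \<longrightarrow> (U * M) $$ (i,c) = 0)" for m
  proof (induction m)
    case 0
    show ?case
      using M zero by (intro bexI[of _ "1\<^sub>m n"]) (auto simp: invertible_mat_iff_inverse[of _ n])
  next
    case (Suc m)
    then obtain U where U: "U \<in> carrier_mat n n" "invertible_mat U" "zero_below_diagonal c (U * M)"
      and cleared: "\<forall>i. c < i \<and> i < m \<and> i < n \<longrightarrow> (U * M) $$ (i,c) = 0" by blast
    show ?case
    proof (cases "c < m \<and> m < n")
      case False
      then show ?thesis using U cleared by (auto simp: less_Suc_eq)
    next
      case True
      have UM: "U * M \<in> carrier_mat n n" using U M by simp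
      obtain G where G: "G \<in> carrier_mat n n" "invertible_mat G" "zero_below_diagonal c (G * (U * M))"
        and "(G * (U * M)) $$ (m,c) = 0"
        and "\<And>i. i < n \<Longrightarrow> i \<noteq> c \<Longrightarrow> i \<noteq> m \<Longrightarrow> (G * (U * M)) $$ (i,c) = (U * M) $$ (i,c)"
        using eliminate_below_diagonal_entry[OF UM _ _ U(3), of m] True by blast
      moreover have "G * (U * M) = G * U * M" using G U M by (simp add: assoc_mult_mat)
      ultimately show ?thesis
        using U cleared invertible_mat_mult[OF G(1) U(1) G(2) U(2)] True
        by (intro bexI[of _ "G * U"]) (auto simp: less_Suc_eq)
    qed
  qed
  from this[of n] obtain U where "U \<in> carrier_mat n n" "invertible_mat U" "zero_below_diagonal c (U * M)"
    and "\<forall>i. c < i \<and> i < n \<longrightarrow> (U * M) $$ (i,c) = 0" by auto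
  then show ?thesis
    using that M by (auto simp: zero_below_diagonal_def less_Suc_eq)
qed

lemma invertible_upper_triangularization:
  fixes M :: "'a :: euclidean_ring_gcd mat"
  assumes M: "M \<in> carrier_mat n n"
  obtains U where "U \<in> carrier_mat n n" "invertible_mat U" "upper_triangular (U * M)"
proof -
  have "\<exists>U \<in> carrier_mat n n. invertible_mat U \<and> zero_below_diagonal c (U * M)" for c
  proof (induction c)
    case 0
    show ?case
      using M by (intro bexI[of _ "1\<^sub>m n"]) (auto simp: invertible_mat_iff_inverse[of _ n] zero_below_diagonal_def)
  next
    case (Suc c)
    then obtain U where U: "U \<in> carrier_mat n n" "invertible_mat U" "zero_below_diagonal c (U * M)"
      by auto
    obtain W where W: "W \<in> carrier_mat n n" "invertible_mat W" "zero_below_diagonal (Suc c) (W * (U * M))"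
      using clear_column_below_diagonal[of "U * M" n c] U M by auto
    moreover have "W * (U * M) = W * U * M" using W U M by (simp add: assoc_mult_mat)
    ultimately show ?case
      using invertible_mat_mult[OF W(1) U(1) W(2) U(2)] U by (intro bexI[of _ "W * U"]) auto
  qed
  from this[of n] obtain U where "U \<in> carrier_mat n n" "invertible_mat U" "zero_below_diagonal n (U * M)"
    by blast
  then show ?thesis
    using that M by (auto simp: zero_below_diagonal_def upper_triangular_def)
qed

lemma transpose_mult_mult_index:
  fixes A X Y :: "'a :: comm_semiring_1 mat"
  assumes "A \<in> carrier_mat n n" "X \<in> carrier_mat n n" "Y \<in> carrier_mat n n" "i < n" "j < n"
  shows "(transpose_mat X * A * Y) $$ (i,j) = (\<Sum>k<n. \<Sum>l<n. X $$ (k,i) * A $$ (k,l) * Y $$ (l,j))"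
  using assms
  by (simp add: scalar_prod_def lessThan_atLeast0 sum_distrib_left sum_distrib_right mult.assoc)

lemma upper_triangular_congruence_block_zero:
  fixes T C :: "'a :: idom mat"
  assumes T: "T \<in> carrier_mat n n" "upper_triangular T" "det T \<noteq> 0" and C: "C \<in> carrier_mat n n"
    and "r \<le> n" and block: "\<forall>i<r. \<forall>j<r. (transpose_mat T * C * T) $$ (i,j) = 0"
  shows "\<forall>i<r. \<forall>j<r. C $$ (i,j) = 0"
proof (intro allI impI)
  have diag: "T $$ (i,i) \<noteq> 0" if "i < n" for i
    using T that upper_triangular_imp_det_eq_0_iff[OF T(1,2)] by (auto simp: diag_mat_def)
  fix i j assume "i < r" "j < r"
  then show "C $$ (i,j) = 0"
  \<comment> \<open>By triangularity, \<open>(T' C T)\<^sub>i\<^sub>j\<close> involves only the \<open>C\<^sub>k\<^sub>l\<close> with \<open>k \<le> i\<close> and \<open>l \<le> j\<close>.\<close>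
  proof (induction "i + j" arbitrary: i j rule: less_induct)
    case less
    have ij: "i < n" "j < n" using less.prems \<open>r \<le> n\<close> by auto
    let ?c = "T $$ (i,i) * C $$ (i,j) * T $$ (j,j)"
    have "T $$ (k,i) * C $$ (k,l) * T $$ (l,j) = (if k = i then if l = j then ?c else 0 else 0)"
      if "k < n" "l < n" for k l
    proof (cases "i < k \<or> j < l")
      case True
      then show ?thesis using T that by (auto simp: upper_triangular_def)
    next
      case outside: False
      show ?thesis
      proof (cases "k = i \<and> l = j")
        case False
        with outside have "k + l < i + j" "k < r" "l < r" using less.prems by auto
        then have "C $$ (k,l) = 0" by (rule less.hyps)
        then show ?thesis using \<open>\<not> (k = i \<and> l = j)\<close> by auto
      qed simp
    qed
    then have "(transpose_mat T * C * T) $$ (i,j) = (\<Sum>k<n. if k = i then \<Sum>l<n. if l = j then ?c else 0 else 0)"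
      unfolding transpose_mult_mult_index[OF C T(1) T(1) ij] by (intro sum.cong refl) simp
    also have "\<dots> = ?c"
      using ij by simp
    finally have "(transpose_mat T * C * T) $$ (i,j) = ?c" .
    moreover have "(transpose_mat T * C * T) $$ (i,j) = 0"
      using block less.prems by blast
    ultimately show ?case using diag ij by simp
  qed
qed

lemma null_cobordant_over_of_nonsingular_witness:
  fixes A M :: "'a :: euclidean_ring_gcd mat"
  assumes A: "A \<in> carrier_mat (2*r) (2*r)" and M: "M \<in> carrier_mat (2*r) (2*r)" "det M \<noteq> 0"
    and block: "\<forall>i<r. \<forall>j<r. (transpose_mat M * A * M) $$ (i,j) = 0"
  shows "null_cobordant_over r A"
proof -
  define n where "n = 2 * r"
  have A: "A \<in> carrier_mat n n" and M: "M \<in> carrier_mat n n" using A M n_def by simp_all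
  obtain U where U: "U \<in> carrier_mat n n" "invertible_mat U" and T: "upper_triangular (U * M)"
    using invertible_upper_triangularization[OF M] by blast
  obtain V where V: "V \<in> carrier_mat n n" "U * V = 1\<^sub>m n" "V * U = 1\<^sub>m n"
    using U invertible_mat_iff_inverse by metis
  define T C where "T = U * M" and "C = transpose_mat V * A * V"
  have carriers: "T \<in> carrier_mat n n" "C \<in> carrier_mat n n"
    using U M V A by (simp_all add: T_def C_def)
  have "V * T = M" using U M V by (simp add: T_def assoc_mult_mat[symmetric, of V n n U n M n])
  then have "transpose_mat M * A * M = transpose_mat T * C * T"
    using V(1) carriers A by (auto simp: C_def transpose_mult assoc_mult_mat[of _ n n _ n _ n])
  moreover have "det T \<noteq> 0"
    using det_mult[OF U(1) M(1)] det_nonzero_if_invertible_mat[OF U] \<open>det M \<noteq> 0\<close> by (simp add: T_def)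
  ultimately have "\<forall>i<r. \<forall>j<r. C $$ (i,j) = 0"
    using upper_triangular_congruence_block_zero[OF carriers(1) T[folded T_def] _ carriers(2), of r]
      block n_def by simp
  moreover have "invertible_mat V"
    using U V by (subst invertible_mat_iff_inverse[of _ n]) auto
  ultimately show ?thesis
    using A V(1) unfolding null_cobordant_over_def C_def n_def by blast
qed

lemma transpose_smult_mult_smult:
  fixes A P :: "'a :: comm_semiring_1 mat"
  assumes A: "A \<in> carrier_mat n n" and P: "P \<in> carrier_mat n n"
  shows "transpose_mat (a \<cdot>\<^sub>m P) * A * (a \<cdot>\<^sub>m P) = (a * a) \<cdot>\<^sub>m (transpose_mat P * A * P)"
proof (rule eq_matI)
  fix i j assume "i < dim_row ((a * a) \<cdot>\<^sub>m (transpose_mat P * A * P))"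
    "j < dim_col ((a * a) \<cdot>\<^sub>m (transpose_mat P * A * P))"
  then have ij: "i < n" "j < n" using P by auto
  show "(transpose_mat (a \<cdot>\<^sub>m P) * A * (a \<cdot>\<^sub>m P)) $$ (i,j) = ((a * a) \<cdot>\<^sub>m (transpose_mat P * A * P)) $$ (i,j)"
    using A P ij
    by (simp add: transpose_mult_mult_index[of _ n] sum_distrib_left mult_ac del: index_mult_mat(1) assoc_mult_mat)
qed (use P in auto)

lemma rat_mat_clear_denominators:
  fixes P :: "rat mat"
  assumes P: "P \<in> carrier_mat nr nc"
  obtains d :: int and M where "d \<noteq> 0" "M \<in> carrier_mat nr nc"
    "map_mat rat_of_int M = rat_of_int d \<cdot>\<^sub>m P"
proof -
  define num den where "num x = fst (quotient_of x)" and "den x = snd (quotient_of x)" for x :: rat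
  define d where "d = (\<Prod>ij \<in> {0..<nr} \<times> {0..<nc}. den (P $$ ij))"
  have den_pos: "den x > 0" for x unfolding den_def by (rule quotient_of_denom_pos')
  have "d \<noteq> 0" unfolding d_def using den_pos by (simp add: less_le)
  have den_dvd: "den (P $$ (i,j)) dvd d" if "i < nr" "j < nc" for i j
    unfolding d_def by (rule dvd_prodI) (use that in auto)
  have scaled: "rat_of_int (d div den x * num x) = rat_of_int d * x" if "den x dvd d" for x
  proof -
    obtain e where e: "d = den x * e" using \<open>den x dvd d\<close> by blast
    have "x = rat_of_int (num x) / rat_of_int (den x)"
      unfolding num_def den_def by (cases "quotient_of x") (simp add: quotient_of_div)
    then show ?thesis using e den_pos[of x] by (subst (2) \<open>x = _\<close>) (simp add: field_simps)
  qed
  define M where "M = mat nr nc (\<lambda>(i,j). d div den (P $$ (i,j)) * num (P $$ (i,j)))"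
  have "map_mat rat_of_int M = rat_of_int d \<cdot>\<^sub>m P"
    by (rule eq_matI) (use P den_dvd scaled in \<open>auto simp: M_def\<close>)
  then show ?thesis by (rule that[OF \<open>d \<noteq> 0\<close>, rotated]) (simp add: M_def)
qed

lemma null_cobordant_of_rationally_null_cobordant:
  fixes A :: "int mat"
  assumes A: "A \<in> carrier_mat (2*r) (2*r)"
    and "rationally_null_cobordant r (map_mat rat_of_int A)"
  shows "null_cobordant r A"
proof -
  define n where "n = 2 * r"
  let ?AQ = "map_mat rat_of_int A"
  obtain P where P: "P \<in> carrier_mat n n" "invertible_mat P"
    and block: "\<forall>i<r. \<forall>j<r. (transpose_mat P * ?AQ * P) $$ (i,j) = 0"
    using assms(2) unfolding null_cobordant_over_def n_def by blast
  obtain d M where "d \<noteq> 0" and M: "M \<in> carrier_mat n n"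
    and dP: "map_mat rat_of_int M = rat_of_int d \<cdot>\<^sub>m P"
    using rat_mat_clear_denominators[OF P(1)] by blast
  have "rat_of_int (det M) = rat_of_int d ^ n * det P"
    using P(1) by (simp add: of_int_hom.hom_det[symmetric] dP)
  then have "det M \<noteq> 0"
    using \<open>d \<noteq> 0\<close> det_nonzero_if_invertible_mat[OF P] by auto
  have scaled: "map_mat rat_of_int (transpose_mat M * A * M) =
      (rat_of_int d * rat_of_int d) \<cdot>\<^sub>m (transpose_mat P * ?AQ * P)"
    using A M P(1) n_def
    by (simp add: of_int_hom.mat_hom_congruence dP transpose_smult_mult_smult del: assoc_mult_mat)
  have "\<forall>i<r. \<forall>j<r. (transpose_mat M * A * M) $$ (i,j) = 0"
  proof (intro allI impI)
    fix i j assume ij: "i < r" "j < r"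
    then have "rat_of_int ((transpose_mat M * A * M) $$ (i,j)) =
        map_mat rat_of_int (transpose_mat M * A * M) $$ (i,j)"
      using A M n_def by simp
    also have "\<dots> = rat_of_int d * rat_of_int d * (transpose_mat P * ?AQ * P) $$ (i,j)"
      unfolding scaled using ij A P(1) n_def by simp
    also have "\<dots> = 0"
      using block ij by simp
    finally show "(transpose_mat M * A * M) $$ (i,j) = 0" by simp
  qed
  then show ?thesis
    using null_cobordant_over_of_nonsingular_witness[OF A] M \<open>det M \<noteq> 0\<close> n_def by blast
qed

theorem mainTheorem20:
  fixes A :: "int mat" and r :: nat
  assumes "A \<in> carrier_mat (2*r) (2*r)"
  shows "null_cobordant r A \<longleftrightarrow> rationally_null_cobordant r (map_mat rat_of_int A)"
  using of_int_hom.null_cobordant_over_hom null_cobordant_of_rationally_null_cobordant[OF assms]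
  by blast

end
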